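(* For every term $t\in T( *,\circ,x)$ and every word $w\in\mathcal{W}$ such that $t\cdot\mathit{eval}(w)$ is defined, the equality $\mathtt{Cc}(t\cdot\mathit{eval}(w))=\mathtt{Cc}(t)\cdot\mathrm{sh}_0(\mathtt{eval}(w))$ holds in the group $G_{\mathtt{ALD}}$. (That is, $\mathtt{Cc}$ is an $\mathrm{sh}_0$-blueprint for the $\mathtt{ALD}$-laws.)
   Context: $T( *,\circ,x)$: terms in the single variable $x$ with binary symbols $*,\circ$. Addresses: finite sequences over $\{0,1\}$, $\varepsilon$ empty, concatenation written by juxtaposition; $t/\alpha$ the subterm at $\alpha$. Two addresses are incomparable if neither is a prefix of the other. Partial operators on terms (acting on the right): $S^{+}_{\alpha}$ is defined on $t$ iff $t/\alpha=t_1*(t_2\square t_3)$ with $\square\in\{*,\circ\}$ and replaces it by $(t_1*t_2)\square(t_1*t_3)$; $A^{+}_{\alpha}$ is defined iff $t/\alpha=t_1*(t_2*t_3)$ and replaces it by $(t_1\circ t_2)*t_3$; $S^-_\alpha,A^-_\alpha$ are the inverse partial maps. $\mathcal{W}$ is the free monoid on the letters $S^{\pm}_\alpha,A^{\pm}_\alpha$; $\mathit{eval}(w)$ is the partial map obtained by applying the letters of $w$ from left to right. $G_{\mathtt{ALD}}$ is the group generated by elements $S_\alpha,A_\alpha$ ($\alpha\in\{0,1\}^*$) subject to the following relations, where $X,Y$ each stand for $S$ or $A$ and $\alpha,\beta,\delta$ are arbitrary addresses ($\delta$ possibly empty): $X_\alpha Y_\beta=Y_\beta X_\alpha$ for $\alpha,\beta$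 incomparable; $X_{\alpha0\delta}S_\alpha=S_\alpha X_{\alpha00\delta}X_{\alpha10\delta}$; $X_{\alpha10\delta}S_\alpha=S_\alpha X_{\alpha01\delta}$; $X_{\alpha11\delta}S_\alpha=S_\alpha X_{\alpha11\delta}$; $X_{\alpha0\delta}A_\alpha=A_\alpha X_{\alpha00\delta}$; $X_{\alpha10\delta}A_\alpha=A_\alpha X_{\alpha01\delta}$; $X_{\alpha11\delta}A_\alpha=A_\alpha X_{\alpha1\delta}$; $S_\alpha S_{\alpha1}S_\alpha=S_{\alpha1}S_\alpha S_{\alpha1}S_{\alpha0}$; $S_\alpha S_{\alpha1}A_\alpha=A_{\alpha1}S_\alpha S_{\alpha0}$; $A_\alpha S_\alpha=S_{\alpha1}S_\alpha A_{\alpha1}A_{\alpha0}$. $\mathtt{eval}:\mathcal{W}\to G_{\mathtt{ALD}}$ is the monoid homomorphism with $S^{+}_\alpha\mapsto S_\alpha$, $S^-_\alpha\mapsto S_\alpha^{-1}$, $A^+_\alpha\mapsto A_\alpha$, $A^-_\alpha\mapsto A_\alpha^{-1}$. For an address $\beta$, $\mathrm{sh}_\beta$ is the endomorphism of $G_{\mathtt{ALD}}$ with $S_\alpha\mapsto S_{\beta\alpha}$, $A_\alpha\mapsto A_{\beta\alpha}$. $\mathtt{Cc}:T( *,\circ,x)\to G_{\mathtt{ALD}}$ is defined by $\mathtt{Cc}(x)=1$, $\mathtt{Cc}(t_1*t_2)=\mathtt{Cc}(t_1)\,\mathrm{sh}_1(\mathtt{Cc}(t_2))\,S_\varepsilon\,\mathrm{sh}_1(\mathtt{Cc}(t_1))^{-1}$,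 $\mathtt{Cc}(t_1\circ t_2)=\mathtt{Cc}(t_1)\,\mathrm{sh}_1(\mathtt{Cc}(t_2))\,A_\varepsilon$. *)

theory Defs
  imports Main "HOL-Library.Sublist"
begin

datatype trm = Var | Star trm trm | Circ trm trm

text \<open>Addresses: finite sequences over {0,1}; False encodes 0, True encodes 1.\<close>
type_synonym addr = "bool list"

fun at_addr :: "addr \<Rightarrow> (trm \<Rightarrow> trm option) \<Rightarrow> trm \<Rightarrow> trm option" where
  "at_addr [] f t = f t"
| "at_addr (False # a) f (Star t1 t2) = map_option (\<lambda>s. Star s t2) (at_addr a f t1)"
| "at_addr (True # a) f (Star t1 t2) = map_option (\<lambda>s. Star t1 s) (at_addr a f t2)"
| "at_addr (False # a) f (Circ t1 t2) = map_option (\<lambda>s. Circ s t2) (at_addr a f t1)"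
| "at_addr (True # a) f (Circ t1 t2) = map_option (\<lambda>s. Circ t1 s) (at_addr a f t2)"
| "at_addr (_ # a) f Var = None"

fun Splus0 :: "trm \<Rightarrow> trm option" where
  "Splus0 (Star t1 (Star t2 t3)) = Some (Star (Star t1 t2) (Star t1 t3))"
| "Splus0 (Star t1 (Circ t2 t3)) = Some (Circ (Star t1 t2) (Star t1 t3))"
| "Splus0 _ = None"

fun Aplus0 :: "trm \<Rightarrow> trm option" where
  "Aplus0 (Star t1 (Star t2 t3)) = Some (Star (Circ t1 t2) t3)"
| "Aplus0 _ = None"

fun Sminus0 :: "trm \<Rightarrow> trm option" where
  "Sminus0 (Star (Star t1 t2) (Star t1' t3)) =
     (if t1 = t1' then Some (Star t1 (Star t2 t3)) else None)"
| "Sminus0 (Circ (Star t1 t2) (Star t1' t3)) =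
     (if t1 = t1' then Some (Star t1 (Circ t2 t3)) else None)"
| "Sminus0 _ = None"

fun Aminus0 :: "trm \<Rightarrow> trm option" where
  "Aminus0 (Star (Circ t1 t2) t3) = Some (Star t1 (Star t2 t3))"
| "Aminus0 _ = None"

datatype letter = Sp addr | Sm addr | Ap addr | Am addr

fun letter_op :: "letter \<Rightarrow> trm \<Rightarrow> trm option" where
  "letter_op (Sp a) = at_addr a Splus0"
| "letter_op (Sm a) = at_addr a Sminus0"
| "letter_op (Ap a) = at_addr a Aplus0"
| "letter_op (Am a) = at_addr a Aminus0"

fun eval_op :: "letter list \<Rightarrow> trm \<Rightarrow> trm option" where
  "eval_op [] t = Some t"
| "eval_op (l # w) t = Option.bind (letter_op l t) (eval_op w)"

section \<open>The group G_ALD, as words in the generators and their inverses modulo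
  the congruence generated by free cancellation and the defining relations\<close>

datatype gen = GS addr | GA addr

text \<open>A group word: (g, True) stands for g, (g, False) for g^-1.\<close>
type_synonym gword = "(gen \<times> bool) list"

definition pos :: "gen \<Rightarrow> gen \<times> bool" where "pos g = (g, True)"

definition incomparable :: "addr \<Rightarrow> addr \<Rightarrow> bool" where
  "incomparable a b \<longleftrightarrow> \<not> prefix a b \<and> \<not> prefix b a"

inductive_set ald_rels :: "(gword \<times> gword) set" where
  comm: "\<lbrakk>X \<in> {GS, GA}; Y \<in> {GS, GA}; incomparable a b\<rbrakk> \<Longrightarrow>
     ([pos (X a), pos (Y b)], [pos (Y b), pos (X a)]) \<in> ald_rels"
| S0: "X \<in> {GS, GA} \<Longrightarrow>
     ([pos (X (a @ [False] @ d)), pos (GS a)],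
      [pos (GS a), pos (X (a @ [False, False] @ d)), pos (X (a @ [True, False] @ d))]) \<in> ald_rels"
| S10: "X \<in> {GS, GA} \<Longrightarrow>
     ([pos (X (a @ [True, False] @ d)), pos (GS a)],
      [pos (GS a), pos (X (a @ [False, True] @ d))]) \<in> ald_rels"
| S11: "X \<in> {GS, GA} \<Longrightarrow>
     ([pos (X (a @ [True, True] @ d)), pos (GS a)],
      [pos (GS a), pos (X (a @ [True, True] @ d))]) \<in> ald_rels"
| A0: "X \<in> {GS, GA} \<Longrightarrow>
     ([pos (X (a @ [False] @ d)), pos (GA a)],
      [pos (GA a), pos (X (a @ [False, False] @ d))]) \<in> ald_rels"
| A10: "X \<in> {GS, GA} \<Longrightarrow>
     ([pos (X (a @ [True, False] @ d)), pos (GA a)],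
      [pos (GA a), pos (X (a @ [False, True] @ d))]) \<in> ald_rels"
| A11: "X \<in> {GS, GA} \<Longrightarrow>
     ([pos (X (a @ [True, True] @ d)), pos (GA a)],
      [pos (GA a), pos (X (a @ [True] @ d))]) \<in> ald_rels"
| SSS: "([pos (GS a), pos (GS (a @ [True])), pos (GS a)],
         [pos (GS (a @ [True])), pos (GS a), pos (GS (a @ [True])), pos (GS (a @ [False]))]) \<in> ald_rels"
| SSA: "([pos (GS a), pos (GS (a @ [True])), pos (GA a)],
         [pos (GA (a @ [True])), pos (GS a), pos (GS (a @ [False]))]) \<in> ald_rels"
| AS: "([pos (GA a), pos (GS a)],
        [pos (GS (a @ [True])), pos (GS a), pos (GA (a @ [True])), pos (GA (a @ [False]))]) \<in> ald_rels"

inductive ald_eq :: "gword \<Rightarrow> gword \<Rightarrow> bool" where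
  refl: "ald_eq u u"
| sym: "ald_eq u v \<Longrightarrow> ald_eq v u"
| trans: "ald_eq u v \<Longrightarrow> ald_eq v w \<Longrightarrow> ald_eq u w"
| cancel: "ald_eq (u @ [(g, b), (g, \<not> b)] @ v) (u @ v)"
| rel: "(l, r) \<in> ald_rels \<Longrightarrow> ald_eq (u @ l @ v) (u @ r @ v)"

definition winv :: "gword \<Rightarrow> gword" where
  "winv u = rev (map (\<lambda>(g, b). (g, \<not> b)) u)"

fun sh_gen :: "addr \<Rightarrow> gen \<Rightarrow> gen" where
  "sh_gen b (GS a) = GS (b @ a)"
| "sh_gen b (GA a) = GA (b @ a)"

definition sh :: "addr \<Rightarrow> gword \<Rightarrow> gword" where
  "sh b u = map (\<lambda>(g, e). (sh_gen b g, e)) u"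

fun letter_grp :: "letter \<Rightarrow> gen \<times> bool" where
  "letter_grp (Sp a) = (GS a, True)"
| "letter_grp (Sm a) = (GS a, False)"
| "letter_grp (Ap a) = (GA a, True)"
| "letter_grp (Am a) = (GA a, False)"

definition eval_grp :: "letter list \<Rightarrow> gword" where
  "eval_grp w = map letter_grp w"

fun Cc :: "trm \<Rightarrow> gword" where
  "Cc Var = []"
| "Cc (Star t1 t2) = Cc t1 @ sh [True] (Cc t2) @ [pos (GS [])] @ winv (sh [True] (Cc t1))"
| "Cc (Circ t1 t2) = Cc t1 @ sh [True] (Cc t2) @ [pos (GA [])]"

end

theory Submission
  imports Defs
begin

(* Words act letter by letter, so it suffices to treat a single letter, and an inverse letter
   reduces to the positive letter applied to the result.  For a positive letter at the root the
   three rewrites t1*(t2*t3) -> (t1*t2)*(t1*t3), t1*(t2 o t3) -> (t1*t2) o (t1*t3) and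
   t1*(t2*t3) -> (t1 o t2)*t3 are checked by direct computation: after cancelling
   sh_1(Cc t1)^-1 sh_1(Cc t1), moving the factors shifted into the subtree 11 across S_eps and
   A_eps, and moving the new generator at address 0 across factors living in the subtree 1, what
   is left is one of the relations SSS, SSA, AS.  A letter at a deeper address is handled by
   induction on the address: the relations for X_{0d} and X_{10d} against S_eps and A_eps carry
   the generator from the subterm to the corresponding address of the whole term. *)

notation ald_eq (infix "\<approx>" 50)

declare ald_eq.trans [trans]

lemma ald_eq_in_context: "u \<approx> v \<Longrightarrow> x @ u @ y \<approx> x @ v @ y"
proof (induction rule: ald_eq.induct)
  case (refl u)
  show ?case by (rule ald_eq.refl)
next
  case (sym u v)
  from sym.IH show ?case by (rule ald_eq.sym)
next
  case (trans u v w)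
  from trans.IH show ?case by (rule ald_eq.trans)
next
  case (cancel u g b v)
  then show ?case using ald_eq.cancel[of "x @ u" g b "v @ y"] by simp
next
  case (rel l r u v)
  then show ?case using ald_eq.rel[of l r "x @ u" "v @ y"] by simp
qed

lemma ald_eq_append: "u \<approx> u' \<Longrightarrow> v \<approx> v' \<Longrightarrow> u @ v \<approx> u' @ v'"
  using ald_eq_in_context[of u u' "[]" v] ald_eq_in_context[of v v' u' "[]"]
  by (auto intro: ald_eq.trans)

lemma ald_rels_imp_ald_eq: "(l, r) \<in> ald_rels \<Longrightarrow> l \<approx> r"
  using ald_eq.rel[of l r "[]" "[]"] by simp

lemma ald_eq_cancel_pair: "[(g, b), (g, \<not> b)] \<approx> []"
  using ald_eq.cancel[of "[]" g b "[]"] by simp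

lemma winv_Nil [simp]: "winv [] = []"
  by (simp add: winv_def)

lemma winv_append [simp]: "winv (u @ v) = winv v @ winv u"
  by (simp add: winv_def)

lemma winv_Cons [simp]: "winv ((g, b) # u) = winv u @ [(g, \<not> b)]"
  by (simp add: winv_def)

lemma winv_pos [simp]: "winv (pos g # u) = winv u @ [(g, False)]"
  by (simp add: pos_def)

lemma winv_winv [simp]: "winv (winv u) = u"
  by (induction u) auto

lemma ald_eq_append_winv: "u @ winv u \<approx> []"
proof (induction u)
  case Nil
  then show ?case by (simp add: ald_eq.refl)
next
  case (Cons x u)
  obtain g b where x: "x = (g, b)" by force
  have "x # u @ winv u @ [(g, \<not> b)] \<approx> [x] @ [] @ [(g, \<not> b)]"
    using ald_eq_in_context[OF Cons.IH, of "[x]" "[(g, \<not> b)]"] by simp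
  also have "\<dots> \<approx> []"
    using ald_eq_cancel_pair[of g b] x by simp
  finally show ?case using x by simp
qed

lemma ald_eq_winv_append: "winv u @ u \<approx> []"
  using ald_eq_append_winv[of "winv u"] by simp

lemma ald_eq_winv: assumes "u \<approx> v" shows "winv u \<approx> winv v"
proof -
  have "winv u \<approx> winv u @ v @ winv v"
    using ald_eq_in_context[OF ald_eq.sym[OF ald_eq_append_winv[of v]], of "winv u" "[]"] by simp
  also have "\<dots> \<approx> winv u @ u @ winv v"
    using ald_eq_in_context[OF ald_eq.sym[OF assms], of "winv u" "winv v"] by simp
  also have "\<dots> \<approx> winv v"
    using ald_eq_in_context[OF ald_eq_winv_append[of u], of "[]" "winv v"] by simp
  finally show ?thesis .
qed

lemma ald_eq_conjugate_winv:
  assumes "x @ h \<approx> h @ y"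
  shows "winv x @ h \<approx> h @ winv y"
proof -
  have "winv x @ h \<approx> winv x @ h @ y @ winv y"
    using ald_eq_in_context[OF ald_eq.sym[OF ald_eq_append_winv[of y]], of "winv x @ h" "[]"]
    by simp
  also have "\<dots> \<approx> winv x @ x @ h @ winv y"
    using ald_eq_in_context[OF ald_eq.sym[OF assms], of "winv x" "winv y"] by simp
  also have "\<dots> \<approx> h @ winv y"
    using ald_eq_in_context[OF ald_eq_winv_append[of x], of "[]" "h @ winv y"] by simp
  finally show ?thesis .
qed

lemma ald_eq_cancel_right: "u \<approx> v @ [(g, b)] \<Longrightarrow> u @ [(g, \<not> b)] \<approx> v"
  using ald_eq_in_context[of u "v @ [(g, b)]" "[]" "[(g, \<not> b)]"]
    ald_eq_in_context[OF ald_eq_cancel_pair[of g b], of v "[]"]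
  by (auto intro: ald_eq.trans)

lemma sh_Nil [simp]: "sh p [] = []"
  by (simp add: sh_def)

lemma sh_append [simp]: "sh p (u @ v) = sh p u @ sh p v"
  by (simp add: sh_def)

lemma sh_Cons [simp]: "sh p ((g, b) # u) = (sh_gen p g, b) # sh p u"
  by (simp add: sh_def)

lemma sh_pos [simp]: "sh p (pos g # u) = pos (sh_gen p g) # sh p u"
  by (simp add: pos_def)

lemma sh_gen_sh_gen [simp]: "sh_gen p (sh_gen q g) = sh_gen (p @ q) g"
  by (cases g) auto

lemma sh_sh [simp]: "sh p (sh q u) = sh (p @ q) u"
  by (induction u) auto

lemma sh_winv [simp]: "sh p (winv u) = winv (sh p u)"
  by (induction u) auto

lemma sh_gen_kind: "X \<in> {GS, GA} \<Longrightarrow> sh_gen p (X a) = X (p @ a)"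
  by auto

lemma sh_ald_rels: "(l, r) \<in> ald_rels \<Longrightarrow> (sh p l, sh p r) \<in> ald_rels"
proof (induction rule: ald_rels.induct)
  case (comm X Y a b)
  then have "incomparable (p @ a) (p @ b)" by (simp add: incomparable_def)
  then show ?case using ald_rels.comm[of X Y "p @ a" "p @ b"] comm by (simp add: sh_gen_kind)
next
  case (S0 X a d) then show ?case using ald_rels.S0[of X "p @ a" d] by (simp add: sh_gen_kind)
next
  case (S10 X a d) then show ?case using ald_rels.S10[of X "p @ a" d] by (simp add: sh_gen_kind)
next
  case (S11 X a d) then show ?case using ald_rels.S11[of X "p @ a" d] by (simp add: sh_gen_kind)
next
  case (A0 X a d) then show ?case using ald_rels.A0[of X "p @ a" d] by (simp add: sh_gen_kind)
next
  case (A10 X a d) then show ?case using ald_rels.A10[of X "p @ a" d] by (simp add: sh_gen_kind)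
next
  case (A11 X a d) then show ?case using ald_rels.A11[of X "p @ a" d] by (simp add: sh_gen_kind)
next
  case (SSS a) then show ?case using ald_rels.SSS[of "p @ a"] by simp
next
  case (SSA a) then show ?case using ald_rels.SSA[of "p @ a"] by simp
next
  case (AS a) then show ?case using ald_rels.AS[of "p @ a"] by simp
qed

lemma ald_eq_sh: "u \<approx> v \<Longrightarrow> sh p u \<approx> sh p v"
proof (induction rule: ald_eq.induct)
  case (cancel u g b v)
  then show ?case using ald_eq.cancel[of "sh p u" "sh_gen p g" b "sh p v"] by simp
next
  case (rel l r u v)
  then show ?case using ald_eq.rel[OF sh_ald_rels[OF rel, of p], of "sh p u" "sh p v"] by simp
qed (auto intro: ald_eq.intros)

lemma sh_conjugate:
  assumes "\<And>g. [pos (sh_gen p g)] @ h \<approx> h @ [pos (sh_gen q g)]"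
  shows "sh p u @ h \<approx> h @ sh q u"
proof (induction u)
  case Nil
  show ?case by (simp add: ald_eq.refl)
next
  case (Cons x u)
  obtain g b where x: "x = (g, b)" by force
  have letter: "[(sh_gen p g, b)] @ h \<approx> h @ [(sh_gen q g, b)]"
  proof (cases b)
    case True
    then show ?thesis using assms[of g] by (simp add: pos_def)
  next
    case False
    then show ?thesis using ald_eq_conjugate_winv[OF assms[of g]] by simp
  qed
  have "sh p (x # u) @ h \<approx> [(sh_gen p g, b)] @ h @ sh q u"
    using ald_eq_in_context[OF Cons.IH, of "[(sh_gen p g, b)]" "[]"] x by simp
  also have "\<dots> \<approx> h @ sh q (x # u)"
    using ald_eq_in_context[OF letter, of "[]" "sh q u"] x by simp
  finally show ?case .
qed

lemma incomparable_Cons_Cons [simp]: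
  "incomparable (a # p) (b # q) \<longleftrightarrow> a \<noteq> b \<or> incomparable p q"
  by (auto simp: incomparable_def)

lemma incomparable_append: "incomparable p q \<Longrightarrow> incomparable (p @ d) q"
  unfolding incomparable_def
  by (meson prefix_order.trans prefix_same_cases prefixI)

lemma sh_commute_incomparable:
  assumes "incomparable p q" and X: "X \<in> {GS, GA}"
  shows "sh p u @ [pos (X q)] \<approx> [pos (X q)] @ sh p u"
proof (rule sh_conjugate)
  fix g
  obtain Y d where Y: "Y \<in> {GS, GA}" "g = Y d" by (cases g) auto
  have "incomparable (p @ d) q" using assms(1) by (rule incomparable_append)
  then show "[pos (sh_gen p g)] @ [pos (X q)] \<approx> [pos (X q)] @ [pos (sh_gen p g)]"
    using ald_rels_imp_ald_eq[OF ald_rels.comm[OF Y(1) X]] Y by (simp add: sh_gen_kind)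
qed

lemma sh11_commute_S: "sh [True, True] u @ [pos (GS [])] \<approx> [pos (GS [])] @ sh [True, True] u"
proof (rule sh_conjugate)
  fix g
  obtain Y d where Y: "Y \<in> {GS, GA}" "g = Y d" by (cases g) auto
  then show "[pos (sh_gen [True, True] g)] @ [pos (GS [])] \<approx> [pos (GS [])] @ [pos (sh_gen [True, True] g)]"
    using ald_rels_imp_ald_eq[OF ald_rels.S11[OF Y(1), of "[]" d]] by (simp add: sh_gen_kind)
qed

lemma sh11_conjugate_A: "sh [True, True] u @ [pos (GA [])] \<approx> [pos (GA [])] @ sh [True] u"
proof (rule sh_conjugate)
  fix g
  obtain Y d where Y: "Y \<in> {GS, GA}" "g = Y d" by (cases g) auto
  then show "[pos (sh_gen [True, True] g)] @ [pos (GA [])] \<approx> [pos (GA [])] @ [pos (sh_gen [True] g)]"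
    using ald_rels_imp_ald_eq[OF ald_rels.A11[OF Y(1), of "[]" d]] by (simp add: sh_gen_kind)
qed

subsection \<open>The three laws at the root\<close>

lemma SSS_root:
  "[pos (GS []), pos (GS [True]), pos (GS []), (GS [True], False)]
     \<approx> [pos (GS [True]), pos (GS []), pos (GS [False])]"
proof -
  have "[pos (GS []), pos (GS [True]), pos (GS [])]
      \<approx> [pos (GS [True]), pos (GS []), pos (GS [True]), pos (GS [False])]"
    using ald_rels_imp_ald_eq[OF ald_rels.SSS[of "[]"]] by simp
  also have "\<dots> \<approx> [pos (GS [True]), pos (GS []), pos (GS [False]), pos (GS [True])]"
    using ald_eq_in_context[OF ald_rels_imp_ald_eq[OF ald_rels.comm[of GS GS "[True]" "[False]"]],
        of "[pos (GS [True]), pos (GS [])]" "[]"]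
    by simp
  finally have "[pos (GS []), pos (GS [True]), pos (GS [])]
      \<approx> [pos (GS [True]), pos (GS []), pos (GS [False])] @ [(GS [True], True)]"
    by (simp add: pos_def)
  from ald_eq_cancel_right[OF this] show ?thesis by simp
qed

lemma AS_root:
  "[pos (GA []), pos (GS []), (GA [True], False)]
     \<approx> [pos (GS [True]), pos (GS []), pos (GA [False])]"
proof -
  have "[pos (GA []), pos (GS [])]
      \<approx> [pos (GS [True]), pos (GS []), pos (GA [True]), pos (GA [False])]"
    using ald_rels_imp_ald_eq[OF ald_rels.AS[of "[]"]] by simp
  also have "\<dots> \<approx> [pos (GS [True]), pos (GS []), pos (GA [False]), pos (GA [True])]"
    using ald_eq_in_context[OF ald_rels_imp_ald_eq[OF ald_rels.comm[of GA GA "[True]" "[False]"]],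
        of "[pos (GS [True]), pos (GS [])]" "[]"]
    by simp
  finally have "[pos (GA []), pos (GS [])]
      \<approx> [pos (GS [True]), pos (GS []), pos (GA [False])] @ [(GA [True], True)]"
    by (simp add: pos_def)
  from ald_eq_cancel_right[OF this] show ?thesis by simp
qed

lemma Cc_Splus0_Star:
  "Cc (Star (Star t1 t2) (Star t1 t3)) \<approx> Cc (Star t1 (Star t2 t3)) @ [pos (GS [False])]"
proof -
  let ?C = "Cc t1" and ?c = "sh [True] (Cc t1)" and ?cc = "sh [True, True] (Cc t1)"
  let ?d = "sh [True] (Cc t2)" and ?dd = "sh [True, True] (Cc t2)"
  let ?ee = "sh [True, True] (Cc t3)"
  let ?S = "pos (GS [])" and ?Sr = "pos (GS [True])" and ?Sl = "pos (GS [False])"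
  let ?Sr_inv = "(GS [True], False)"
  have "Cc (Star (Star t1 t2) (Star t1 t3)) \<approx> ?C @ ?d @ [?S] @ winv ?c @ ?c @ ?ee @ [?Sr]
      @ winv ?cc @ [?S] @ ?cc @ [?Sr_inv] @ winv ?dd @ winv ?c"
    by (simp add: ald_eq.refl)
  also have "\<dots> \<approx> ?C @ ?d @ [?S] @ ?ee @ [?Sr] @ winv ?cc @ [?S] @ ?cc @ [?Sr_inv]
      @ winv ?dd @ winv ?c"
    using ald_eq_in_context[OF ald_eq_winv_append[of ?c], of "?C @ ?d @ [?S]"] by simp
  also have "\<dots> \<approx> ?C @ ?d @ [?S] @ ?ee @ [?Sr] @ [?S] @ winv ?cc @ ?cc @ [?Sr_inv]
      @ winv ?dd @ winv ?c"
    using ald_eq_in_context[OF sh11_commute_S[of "winv (Cc t1)"], of "?C @ ?d @ [?S] @ ?ee @ [?Sr]"]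
    by simp
  also have "\<dots> \<approx> ?C @ ?d @ [?S] @ ?ee @ [?Sr, ?S, ?Sr_inv] @ winv ?dd @ winv ?c"
    using ald_eq_in_context[OF ald_eq_winv_append[of ?cc], of "?C @ ?d @ [?S] @ ?ee @ [?Sr, ?S]"]
    by simp
  also have "\<dots> \<approx> ?C @ ?d @ ?ee @ [?S, ?Sr, ?S, ?Sr_inv] @ winv ?dd @ winv ?c"
    using ald_eq_in_context[OF ald_eq.sym[OF sh11_commute_S[of "Cc t3"]], of "?C @ ?d"] by simp
  also have "\<dots> \<approx> ?C @ ?d @ ?ee @ [?Sr, ?S, ?Sl] @ winv ?dd @ winv ?c"
    using ald_eq_in_context[OF SSS_root, of "?C @ ?d @ ?ee"] by simp
  also have "\<dots> \<approx> ?C @ ?d @ ?ee @ [?Sr, ?S] @ winv ?dd @ [?Sl] @ winv ?c"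
    using ald_eq_in_context[OF ald_eq.sym[OF sh_commute_incomparable[of "[True, True]" "[False]" GS
        "winv (Cc t2)"]], of "?C @ ?d @ ?ee @ [?Sr, ?S]"]
    by simp
  also have "\<dots> \<approx> ?C @ ?d @ ?ee @ [?Sr] @ winv ?dd @ [?S, ?Sl] @ winv ?c"
    using ald_eq_in_context[OF ald_eq.sym[OF sh11_commute_S[of "winv (Cc t2)"]], of "?C @ ?d @ ?ee @ [?Sr]"]
    by simp
  also have "\<dots> \<approx> ?C @ ?d @ ?ee @ [?Sr] @ winv ?dd @ [?S] @ winv ?c @ [?Sl]"
    using ald_eq_in_context[OF ald_eq.sym[OF sh_commute_incomparable[of "[True]" "[False]" GS
        "winv (Cc t1)"]], of "?C @ ?d @ ?ee @ [?Sr] @ winv ?dd @ [?S]" "[]"]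
    by simp
  also have "\<dots> = Cc (Star t1 (Star t2 t3)) @ [?Sl]"
    by simp
  finally show ?thesis .
qed

lemma Cc_Splus0_Circ:
  "Cc (Circ (Star t1 t2) (Star t1 t3)) \<approx> Cc (Star t1 (Circ t2 t3)) @ [pos (GS [False])]"
proof -
  let ?C = "Cc t1" and ?c = "sh [True] (Cc t1)" and ?cc = "sh [True, True] (Cc t1)"
  let ?d = "sh [True] (Cc t2)" and ?ee = "sh [True, True] (Cc t3)"
  let ?S = "pos (GS [])" and ?Sr = "pos (GS [True])" and ?Sl = "pos (GS [False])"
  let ?A = "pos (GA [])" and ?Ar = "pos (GA [True])"
  have "Cc (Circ (Star t1 t2) (Star t1 t3))
      \<approx> ?C @ ?d @ [?S] @ winv ?c @ ?c @ ?ee @ [?Sr] @ winv ?cc @ [?A]"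
    by (simp add: ald_eq.refl)
  also have "\<dots> \<approx> ?C @ ?d @ [?S] @ ?ee @ [?Sr] @ winv ?cc @ [?A]"
    using ald_eq_in_context[OF ald_eq_winv_append[of ?c], of "?C @ ?d @ [?S]"] by simp
  also have "\<dots> \<approx> ?C @ ?d @ [?S] @ ?ee @ [?Sr, ?A] @ winv ?c"
    using ald_eq_in_context[OF ald_eq_conjugate_winv[OF sh11_conjugate_A[of "Cc t1"]],
        of "?C @ ?d @ [?S] @ ?ee @ [?Sr]" "[]"]
    by simp
  also have "\<dots> \<approx> ?C @ ?d @ ?ee @ [?S, ?Sr, ?A] @ winv ?c"
    using ald_eq_in_context[OF ald_eq.sym[OF sh11_commute_S[of "Cc t3"]], of "?C @ ?d"] by simp
  also have "\<dots> \<approx> ?C @ ?d @ ?ee @ [?Ar, ?S, ?Sl] @ winv ?c"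
    using ald_eq_in_context[OF ald_rels_imp_ald_eq[OF ald_rels.SSA[of "[]"]], of "?C @ ?d @ ?ee"]
    by simp
  also have "\<dots> \<approx> ?C @ ?d @ ?ee @ [?Ar, ?S] @ winv ?c @ [?Sl]"
    using ald_eq_in_context[OF ald_eq.sym[OF sh_commute_incomparable[of "[True]" "[False]" GS
        "winv (Cc t1)"]], of "?C @ ?d @ ?ee @ [?Ar, ?S]" "[]"]
    by simp
  also have "\<dots> = Cc (Star t1 (Circ t2 t3)) @ [?Sl]"
    by simp
  finally show ?thesis .
qed

lemma Cc_Aplus0:
  "Cc (Star (Circ t1 t2) t3) \<approx> Cc (Star t1 (Star t2 t3)) @ [pos (GA [False])]"
proof -
  let ?C = "Cc t1" and ?c = "sh [True] (Cc t1)"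
  let ?d = "sh [True] (Cc t2)" and ?dd = "sh [True, True] (Cc t2)"
  let ?e = "sh [True] (Cc t3)" and ?ee = "sh [True, True] (Cc t3)"
  let ?S = "pos (GS [])" and ?Sr = "pos (GS [True])"
  let ?A = "pos (GA [])" and ?Al = "pos (GA [False])" and ?Ar_inv = "(GA [True], False)"
  have "Cc (Star (Circ t1 t2) t3) \<approx> ?C @ ?d @ [?A] @ ?e @ [?S, ?Ar_inv] @ winv ?dd @ winv ?c"
    by (simp add: ald_eq.refl)
  also have "\<dots> \<approx> ?C @ ?d @ ?ee @ [?A, ?S, ?Ar_inv] @ winv ?dd @ winv ?c"
    using ald_eq_in_context[OF ald_eq.sym[OF sh11_conjugate_A[of "Cc t3"]], of "?C @ ?d"] by simp
  also have "\<dots> \<approx> ?C @ ?d @ ?ee @ [?Sr, ?S, ?Al] @ winv ?dd @ winv ?c"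
    using ald_eq_in_context[OF AS_root, of "?C @ ?d @ ?ee"] by simp
  also have "\<dots> \<approx> ?C @ ?d @ ?ee @ [?Sr, ?S] @ winv ?dd @ [?Al] @ winv ?c"
    using ald_eq_in_context[OF ald_eq.sym[OF sh_commute_incomparable[of "[True, True]" "[False]" GA
        "winv (Cc t2)"]], of "?C @ ?d @ ?ee @ [?Sr, ?S]"]
    by simp
  also have "\<dots> \<approx> ?C @ ?d @ ?ee @ [?Sr] @ winv ?dd @ [?S, ?Al] @ winv ?c"
    using ald_eq_in_context[OF ald_eq.sym[OF sh11_commute_S[of "winv (Cc t2)"]], of "?C @ ?d @ ?ee @ [?Sr]"]
    by simp
  also have "\<dots> \<approx> ?C @ ?d @ ?ee @ [?Sr] @ winv ?dd @ [?S] @ winv ?c @ [?Al]"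
    using ald_eq_in_context[OF ald_eq.sym[OF sh_commute_incomparable[of "[True]" "[False]" GA
        "winv (Cc t1)"]], of "?C @ ?d @ ?ee @ [?Sr] @ winv ?dd @ [?S]" "[]"]
    by simp
  also have "\<dots> = Cc (Star t1 (Star t2 t3)) @ [?Al]"
    by simp
  finally show ?thesis .
qed

lemma Splus0_blueprint: "Splus0 t = Some t' \<Longrightarrow> Cc t' \<approx> Cc t @ [pos (GS [False])]"
  by (elim Splus0.elims) (auto simp del: Cc.simps intro: Cc_Splus0_Star Cc_Splus0_Circ)

lemma Aplus0_blueprint: "Aplus0 t = Some t' \<Longrightarrow> Cc t' \<approx> Cc t @ [pos (GA [False])]"
  by (elim Aplus0.elims) (auto simp del: Cc.simps intro: Cc_Aplus0)

subsection \<open>Laws applied below the root\<close>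

(* Replacing t1 by s also changes the conjugating factor sh_1(Cc s)^-1; the relation
   X_{0d} S = S X_{00d} X_{10d} absorbs the extra X_{10a}^-1 it contributes. *)
lemma Cc_Star_left_step:
  assumes X: "X \<in> {GS, GA}" and s: "Cc s \<approx> Cc t1 @ [pos (X (False # a))]"
  shows "Cc (Star s t2) \<approx> Cc (Star t1 t2) @ [pos (X (False # False # a))]"
proof -
  let ?C = "Cc t1" and ?c = "sh [True] (Cc t1)" and ?d = "sh [True] (Cc t2)"
  let ?S = "pos (GS [])" and ?x = "pos (X (False # a))" and ?y = "pos (X (False # False # a))"
  let ?z = "(X (True # False # a), True)" and ?z_inv = "(X (True # False # a), False)"
  have rel: "[?x, ?S, ?z_inv] \<approx> [?S, ?y]"
  proof -
    have "[?x, ?S] \<approx> [?S, ?y] @ [?z]"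
      using ald_rels_imp_ald_eq[OF ald_rels.S0[OF X, of "[]" a]] by (simp add: pos_def)
    from ald_eq_cancel_right[OF this] show ?thesis by simp
  qed
  have "Cc (Star s t2) = Cc s @ ?d @ [?S] @ winv (sh [True] (Cc s))"
    by simp
  also have "\<dots> \<approx> (?C @ [?x]) @ ?d @ [?S] @ winv (sh [True] (?C @ [?x]))"
    using ald_eq_append[OF s ald_eq_in_context[OF ald_eq_winv[OF ald_eq_sh[OF s, of "[True]"]], of "?d @ [?S]" "[]"]]
    by simp
  also have "\<dots> = ?C @ [?x] @ ?d @ [?S, ?z_inv] @ winv ?c"
    by (simp add: sh_gen_kind[OF X])
  also have "\<dots> \<approx> ?C @ ?d @ [?x, ?S, ?z_inv] @ winv ?c"
    using ald_eq_in_context[OF ald_eq.sym[OF sh_commute_incomparable[of "[True]" "False # a" X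
        "Cc t2"]], of ?C]
    using X by simp
  also have "\<dots> \<approx> ?C @ ?d @ [?S, ?y] @ winv ?c"
    using ald_eq_in_context[OF rel, of "?C @ ?d"] by simp
  also have "\<dots> \<approx> ?C @ ?d @ [?S] @ winv ?c @ [?y]"
    using ald_eq_in_context[OF ald_eq.sym[OF sh_commute_incomparable[of "[True]" "False # False # a" X
        "winv (Cc t1)"]], of "?C @ ?d @ [?S]" "[]"]
    using X by simp
  also have "\<dots> = Cc (Star t1 t2) @ [?y]"
    by simp
  finally show ?thesis .
qed

lemma Cc_Star_right_step:
  assumes X: "X \<in> {GS, GA}" and s: "Cc s \<approx> Cc t2 @ [pos (X (False # a))]"
  shows "Cc (Star t1 s) \<approx> Cc (Star t1 t2) @ [pos (X (False # True # a))]"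
proof -
  let ?C = "Cc t1" and ?c = "sh [True] (Cc t1)" and ?d = "sh [True] (Cc t2)"
  let ?S = "pos (GS [])" and ?z = "pos (X (True # False # a))" and ?w = "pos (X (False # True # a))"
  have "Cc (Star t1 s) \<approx> ?C @ (?d @ [?z]) @ [?S] @ winv ?c"
    using ald_eq_in_context[OF ald_eq_sh[OF s, of "[True]"], of ?C "[?S] @ winv ?c"]
    by (simp add: sh_gen_kind[OF X])
  also have "\<dots> \<approx> ?C @ ?d @ [?S, ?w] @ winv ?c"
    using ald_eq_in_context[OF ald_rels_imp_ald_eq[OF ald_rels.S10[OF X, of "[]" a]], of "?C @ ?d"]
    by simp
  also have "\<dots> \<approx> ?C @ ?d @ [?S] @ winv ?c @ [?w]"
    using ald_eq_in_context[OF ald_eq.sym[OF sh_commute_incomparable[of "[True]" "False # True # a" X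
        "winv (Cc t1)"]], of "?C @ ?d @ [?S]" "[]"]
    using X by simp
  also have "\<dots> = Cc (Star t1 t2) @ [?w]"
    by simp
  finally show ?thesis .
qed

lemma Cc_Circ_left_step:
  assumes X: "X \<in> {GS, GA}" and s: "Cc s \<approx> Cc t1 @ [pos (X (False # a))]"
  shows "Cc (Circ s t2) \<approx> Cc (Circ t1 t2) @ [pos (X (False # False # a))]"
proof -
  let ?C = "Cc t1" and ?d = "sh [True] (Cc t2)"
  let ?A = "pos (GA [])" and ?x = "pos (X (False # a))" and ?y = "pos (X (False # False # a))"
  have "Cc (Circ s t2) \<approx> ?C @ [?x] @ ?d @ [?A]"
    using ald_eq_in_context[OF s, of "[]" "?d @ [?A]"] by simp
  also have "\<dots> \<approx> ?C @ ?d @ [?x, ?A]"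
    using ald_eq_in_context[OF ald_eq.sym[OF sh_commute_incomparable[of "[True]" "False # a" X
        "Cc t2"]], of ?C]
    using X by simp
  also have "\<dots> \<approx> ?C @ ?d @ [?A, ?y]"
    using ald_eq_in_context[OF ald_rels_imp_ald_eq[OF ald_rels.A0[OF X, of "[]" a]], of "?C @ ?d" "[]"]
    by simp
  also have "\<dots> = Cc (Circ t1 t2) @ [?y]"
    by simp
  finally show ?thesis .
qed

lemma Cc_Circ_right_step:
  assumes X: "X \<in> {GS, GA}" and s: "Cc s \<approx> Cc t2 @ [pos (X (False # a))]"
  shows "Cc (Circ t1 s) \<approx> Cc (Circ t1 t2) @ [pos (X (False # True # a))]"
proof -
  let ?C = "Cc t1" and ?d = "sh [True] (Cc t2)"
  let ?A = "pos (GA [])" and ?z = "pos (X (True # False # a))" and ?w = "pos (X (False # True # a))"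
  have "Cc (Circ t1 s) \<approx> ?C @ (?d @ [?z]) @ [?A]"
    using ald_eq_in_context[OF ald_eq_sh[OF s, of "[True]"], of ?C "[?A]"]
    by (simp add: sh_gen_kind[OF X])
  also have "\<dots> \<approx> ?C @ ?d @ [?A, ?w]"
    using ald_eq_in_context[OF ald_rels_imp_ald_eq[OF ald_rels.A10[OF X, of "[]" a]], of "?C @ ?d" "[]"]
    by simp
  also have "\<dots> = Cc (Circ t1 t2) @ [?w]"
    by simp
  finally show ?thesis .
qed

lemma at_addr_blueprint:
  assumes "X \<in> {GS, GA}"
  shows "(\<And>t t'. f t = Some t' \<Longrightarrow> Cc t' \<approx> Cc t @ [pos (X [False])]) \<Longrightarrow>
    at_addr a f t = Some t' \<Longrightarrow> Cc t' \<approx> Cc t @ [pos (X (False # a))]"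
  by (induction a f t arbitrary: t' rule: at_addr.induct)
    (use assms in \<open>auto simp del: Cc.simps intro: Cc_Star_left_step Cc_Star_right_step
        Cc_Circ_left_step Cc_Circ_right_step\<close>)

lemma Splus0_Sminus0: "Sminus0 t = Some t' \<Longrightarrow> Splus0 t' = Some t"
  by (induction t rule: Sminus0.induct) (auto split: if_splits)

lemma Aplus0_Aminus0: "Aminus0 t = Some t' \<Longrightarrow> Aplus0 t' = Some t"
  by (induction t rule: Aminus0.induct) auto

lemma at_addr_inverse:
  "(\<And>t t'. g t = Some t' \<Longrightarrow> f t' = Some t) \<Longrightarrow>
    at_addr a g t = Some t' \<Longrightarrow> at_addr a f t' = Some t"
  by (induction a g t arbitrary: t' rule: at_addr.induct) auto

lemma letter_op_blueprint:
  assumes "letter_op l t = Some s"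
  shows "Cc s \<approx> Cc t @ sh [False] [letter_grp l]"
proof (cases l)
  case (Sp a)
  then show ?thesis
    using at_addr_blueprint[of GS Splus0 a t s] Splus0_blueprint assms by (simp add: pos_def)
next
  case (Ap a)
  then show ?thesis
    using at_addr_blueprint[of GA Aplus0 a t s] Aplus0_blueprint assms by (simp add: pos_def)
next
  case (Sm a)
  then have "at_addr a Splus0 s = Some t"
    using at_addr_inverse[of Sminus0 Splus0 a t s] Splus0_Sminus0 assms by simp
  then have "Cc t \<approx> Cc s @ [(GS (False # a), True)]"
    using at_addr_blueprint[of GS Splus0 a s t] Splus0_blueprint by (simp add: pos_def)
  from ald_eq_cancel_right[OF this] show ?thesis
    using Sm by (auto intro: ald_eq.sym)
next
  case (Am a)
  then have "at_addr a Aplus0 s = Some t"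
    using at_addr_inverse[of Aminus0 Aplus0 a t s] Aplus0_Aminus0 assms by simp
  then have "Cc t \<approx> Cc s @ [(GA (False # a), True)]"
    using at_addr_blueprint[of GA Aplus0 a s t] Aplus0_blueprint by (simp add: pos_def)
  from ald_eq_cancel_right[OF this] show ?thesis
    using Am by (auto intro: ald_eq.sym)
qed

theorem lemma3p8:
  fixes t t' :: trm and w :: "letter list"
  assumes "eval_op w t = Some t'"
  shows "ald_eq (Cc t') (Cc t @ sh [False] (eval_grp w))"
  using assms
proof (induction w arbitrary: t)
  case Nil
  then show ?case by (simp add: eval_grp_def ald_eq.refl)
next
  case (Cons l w)
  then obtain s where s: "letter_op l t = Some s" "eval_op w s = Some t'"
    by (cases "letter_op l t") auto
  have "Cc t' \<approx> Cc s @ sh [False] (eval_grp w)"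
    using Cons.IH[OF s(2)] .
  also have "\<dots> \<approx> (Cc t @ sh [False] [letter_grp l]) @ sh [False] (eval_grp w)"
    using ald_eq_append[OF letter_op_blueprint[OF s(1)] ald_eq.refl] .
  also have "\<dots> = Cc t @ sh [False] (eval_grp (l # w))"
    by (simp add: eval_grp_def sh_def)
  finally show ?case .
qed

end
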